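(* Let $A\in\mathbb{C}^{n\times n}$, and fix $A^-\in A\{1\}$ and $A^{GD}\in A\{GD\}$. For $X\in\mathbb{C}^{n\times n}$ the following are equivalent: (i) $X = A^{-}AA^{GD}$; (ii) $XA=A^{-}A$ and $N(X)=N(AA^{GD})$; (iii) $XAA^{-}=A^{-}AA^{-}$ and $N(X)=N(AA^{GD})$.
   Context: For $A\in\mathbb{C}^{n\times n}$, $ind(A)$ is the smallest nonnegative integer $k$ with $\mathrm{rank}(A^k)=\mathrm{rank}(A^{k+1})$. $A\{1\}$ is the set of matrices $X$ with $AXA=A$. With $k=ind(A)$, $A\{GD\}$ is the set of G-Drazin inverses of $A$: matrices $X$ with $AXA=A$, $XA^{k+1}=A^k$, $A^{k+1}X=A^k$. $N(\cdot)$ denotes null space. *)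

theory Defs
  imports "HOL-Analysis.Analysis"
begin

primrec mpow :: "'a::field^'n^'n \<Rightarrow> nat \<Rightarrow> 'a^'n^'n" where
  "mpow A 0 = mat 1"
| "mpow A (Suc k) = A ** mpow A k"

definition ind :: "'a::field^'n^'n \<Rightarrow> nat" where
  "ind A = (LEAST k. rank (mpow A k) = rank (mpow A (Suc k)))"

definition inner_inverses :: "'a::field^'n^'n \<Rightarrow> ('a^'n^'n) set" where
  "inner_inverses A = {X. A ** X ** A = A}"

definition gdrazin_inverses :: "'a::field^'n^'n \<Rightarrow> ('a^'n^'n) set" where
  "gdrazin_inverses A = {X. A ** X ** A = A
      \<and> X ** mpow A (Suc (ind A)) = mpow A (ind A)
      \<and> mpow A (Suc (ind A)) ** X = mpow A (ind A)}"

definition null_space :: "'a::field^'n^'m \<Rightarrow> ('a^'n) set" where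
  "null_space M = {x. M *v x = 0}"

end

theory Submission
  imports Defs
begin

text \<open>Only the inner-inverse property of \<open>A\<^sup>G\<^sup>D\<close> is needed: it makes \<open>E = A A\<^sup>G\<^sup>D\<close>
  idempotent, so a matrix \<open>X\<close> with \<open>N(E) \<subseteq> N(X)\<close> factors as \<open>X = X E\<close>. Then \<open>X A = A\<^sup>- A\<close>
  forces \<open>X = X A A\<^sup>G\<^sup>D = A\<^sup>- A A\<^sup>G\<^sup>D\<close>, and \<open>X A A\<^sup>- = A\<^sup>- A A\<^sup>-\<close> gives \<open>X A = A\<^sup>- A\<close> after
  multiplying by \<open>A\<close> on the right.\<close>

lemma inner_inverseD: "G \<in> inner_inverses A \<Longrightarrow> A ** G ** A = A"
  by (simp add: inner_inverses_def)

lemma gdrazin_inverse_imp_inner_inverse: "G \<in> gdrazin_inverses A \<Longrightarrow> G \<in> inner_inverses A"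
  by (simp add: gdrazin_inverses_def inner_inverses_def)

lemma idempotent_mult_inner_inverse:
  fixes A G :: "'a::semiring_1^'n^'n"
  assumes "A ** G ** A = A"
  shows "(A ** G) ** (A ** G) = A ** G"
  by (metis assms matrix_mul_assoc)

lemma null_space_subset_mult_left: "null_space M \<subseteq> null_space (P ** M)"
  by (auto simp: null_space_def simp flip: matrix_vector_mul_assoc)

lemma null_space_mult_left_eq:
  assumes "Q ** (P ** M) = M"
  shows "null_space (P ** M) = null_space M"
  by (metis assms null_space_subset_mult_left subset_antisym)

lemma mult_idempotent_eq_if_null_space_subset:
  fixes E X :: "'a::field^'n^'n"
  assumes idem: "E ** E = E" and sub: "null_space E \<subseteq> null_space X"
  shows "X ** E = X"
proof (rule matrix_eq[THEN iffD2, rule_format, symmetric])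
  fix v :: "'a^'n"
  have "E *v (v - E *v v) = 0"
    by (simp add: matrix_vector_mult_diff_distrib matrix_vector_mul_assoc idem)
  then have "X *v (v - E *v v) = 0"
    using sub by (auto simp: null_space_def)
  then show "X *v v = (X ** E) *v v"
    by (simp add: matrix_vector_mult_diff_distrib matrix_vector_mul_assoc)
qed

lemma mult_cancel_right_inner_inverse:
  fixes A Am X Y :: "'a::semiring_1^'n^'n"
  assumes "A ** Am ** A = A" and "X ** A ** Am = Y ** A ** Am"
  shows "X ** A = Y ** A"
  by (metis assms matrix_mul_assoc)

theorem theorem3p6:
  fixes A Am Agd X :: "complex^'n^'n"
  assumes "Am \<in> inner_inverses A"
    and "Agd \<in> gdrazin_inverses A"
  shows "(X = Am ** A ** Agd
          \<longleftrightarrow> (X ** A = Am ** A \<and> null_space X = null_space (A ** Agd)))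
       \<and> (X = Am ** A ** Agd
          \<longleftrightarrow> (X ** A ** Am = Am ** A ** Am \<and> null_space X = null_space (A ** Agd)))"
proof -
  have Am: "A ** Am ** A = A" and G: "A ** Agd ** A = A"
    using assms by (auto intro: inner_inverseD gdrazin_inverse_imp_inner_inverse)
  have solution: "(Am ** A ** Agd) ** A = Am ** A"
    by (metis G matrix_mul_assoc)
  have null_solution: "null_space (Am ** A ** Agd) = null_space (A ** Agd)"
    using null_space_mult_left_eq[of A Am "A ** Agd"] Am by (simp add: matrix_mul_assoc)
  have ii_imp_i: "X = Am ** A ** Agd"
    if "X ** A = Am ** A" and "null_space X = null_space (A ** Agd)"
    using mult_idempotent_eq_if_null_space_subset[OF idempotent_mult_inner_inverse[OF G], of X] that
    by (simp add: matrix_mul_assoc)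
  have iii_imp_ii: "X ** A = Am ** A" if "X ** A ** Am = Am ** A ** Am"
    using mult_cancel_right_inner_inverse[OF Am that] .
  show ?thesis
    using solution null_solution ii_imp_i iii_imp_ii by auto
qed

end
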